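(* Let $f$ be a non-degenerate Hermitian or quadratic form of finite Witt index $n\ge2$ on a vector space $V$ over a field $\mathbb F$, with polar space $\mathcal P=\mathcal P(f)$ naturally embedded in $\mathrm{PG}(V)$, and assume $\mathcal P$ is not a grid (i.e. not the case $f$ quadratic, $n=2$, $\dim V=4$). Let $X$ be a nice subspace of $\mathcal P$. Then $\langle X\rangle_{\mathrm{PG}(V)}\cap\mathcal P=X$.
   Context: Points of $\mathcal P(f)$ are the 1-spaces of $V$ isotropic (Hermitian case) or singular (quadratic case) for $f$; lines are the totally isotropic/singular 2-spaces. A subspace of $\mathcal P$ is a set of points containing every line meeting it in at least two points. A nice subspace of $\mathcal P$ is a subspace containing two mutually disjoint maximal singular subspaces of $\mathcal P$ (equivalently, $\mathcal P$ induces on it a non-degenerate polar space of rank $n$). $\langle X\rangle_{\mathrm{PG}(V)}$ is the projective subspace of $\mathrm{PG}(V)$ spanned by the points of $X$. For quadratic $q$, non-degenerate means $q(v)\ne0$ for all nonzero $v$ in the radical of its bilinearization. *)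

theory Defs
  imports Main "HOL.Vector_Spaces"
begin

text \<open>Vector space V = the type 'v with scalar multiplication scale over the field 'k
  (assumed: vector_space scale). Span/independence are the library notions of Modules.\<close>

definition vspan :: "('k::field \<Rightarrow> 'v::ab_group_add \<Rightarrow> 'v) \<Rightarrow> 'v set \<Rightarrow> 'v set" where
  "vspan scale S = module.span scale S"

definition vindep :: "('k::field \<Rightarrow> 'v::ab_group_add \<Rightarrow> 'v) \<Rightarrow> 'v set \<Rightarrow> bool" where
  "vindep scale S = (\<not> module.dependent scale S)"

definition has_dim :: "('k::field \<Rightarrow> 'v::ab_group_add \<Rightarrow> 'v) \<Rightarrow> nat \<Rightarrow> bool" where
  "has_dim scale d = (\<exists>B. finite B \<and> card B = d \<and> vindep scale B \<and> vspan scale B = UNIV)"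

definition nontrivial_involution :: "('k::field \<Rightarrow> 'k) \<Rightarrow> bool" where
  "nontrivial_involution \<sigma> =
     ((\<forall>a b. \<sigma> (a + b) = \<sigma> a + \<sigma> b) \<and> (\<forall>a b. \<sigma> (a * b) = \<sigma> a * \<sigma> b) \<and>
      (\<forall>a. \<sigma> (\<sigma> a) = a) \<and> \<sigma> \<noteq> id)"

definition nondeg_hermitian ::
  "('k::field \<Rightarrow> 'v::ab_group_add \<Rightarrow> 'v) \<Rightarrow> ('k \<Rightarrow> 'k) \<Rightarrow> ('v \<Rightarrow> 'v \<Rightarrow> 'k) \<Rightarrow> bool" where
  "nondeg_hermitian scale \<sigma> f =
     (nontrivial_involution \<sigma> \<and>
      (\<forall>u u' v. f (u + u') v = f u v + f u' v) \<and>
      (\<forall>a u v. f (scale a u) v = a * f u v) \<and>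
      (\<forall>u v. f v u = \<sigma> (f u v)) \<and>
      (\<forall>v. (\<forall>w. f v w = 0) \<longrightarrow> v = 0))"

definition bilin_of :: "('v::ab_group_add \<Rightarrow> 'k::field) \<Rightarrow> 'v \<Rightarrow> 'v \<Rightarrow> 'k" where
  "bilin_of q u v = q (u + v) - q u - q v"

definition nondeg_quadratic ::
  "('k::field \<Rightarrow> 'v::ab_group_add \<Rightarrow> 'v) \<Rightarrow> ('v \<Rightarrow> 'k) \<Rightarrow> bool" where
  "nondeg_quadratic scale q =
     ((\<forall>a v. q (scale a v) = a * a * q v) \<and>
      (\<forall>u u' v. bilin_of q (u + u') v = bilin_of q u v + bilin_of q u' v) \<and>
      (\<forall>a u v. bilin_of q (scale a u) v = a * bilin_of q u v) \<and>
      (\<forall>v. v \<noteq> 0 \<and> (\<forall>w. bilin_of q v w = 0) \<longrightarrow> q v \<noteq> 0))"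

definition tot_iso :: "('v \<Rightarrow> 'v \<Rightarrow> 'k::zero) \<Rightarrow> 'v set \<Rightarrow> bool" where
  "tot_iso f W = (\<forall>u\<in>W. \<forall>w\<in>W. f u w = 0)"

definition tot_sing :: "('v \<Rightarrow> 'k::zero) \<Rightarrow> 'v set \<Rightarrow> bool" where
  "tot_sing q W = (\<forall>w\<in>W. q w = 0)"

text \<open>In what follows, sing is tot_iso f or tot_sing q; it is only ever applied to subspaces.\<close>

definition witt_index ::
  "('k::field \<Rightarrow> 'v::ab_group_add \<Rightarrow> 'v) \<Rightarrow> ('v set \<Rightarrow> bool) \<Rightarrow> nat \<Rightarrow> bool" where
  "witt_index scale sing n =
     ((\<exists>S. finite S \<and> card S = n \<and> vindep scale S \<and> sing (vspan scale S)) \<and>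
      (\<forall>S. finite S \<and> vindep scale S \<and> sing (vspan scale S) \<longrightarrow> card S \<le> n))"

definition ppoints :: "('k::field \<Rightarrow> 'v::ab_group_add \<Rightarrow> 'v) \<Rightarrow> ('v set \<Rightarrow> bool) \<Rightarrow> 'v set set" where
  "ppoints scale sing = {vspan scale {v} | v. v \<noteq> 0 \<and> sing (vspan scale {v})}"

text \<open>Lines of P: totally isotropic/singular 2-spaces of V; a point p lies on a line L iff p \<subseteq> L\<close>
definition plines :: "('k::field \<Rightarrow> 'v::ab_group_add \<Rightarrow> 'v) \<Rightarrow> ('v set \<Rightarrow> bool) \<Rightarrow> 'v set set" where
  "plines scale sing = {vspan scale S | S. finite S \<and> card S = 2 \<and> vindep scale S \<and> sing (vspan scale S)}"

definition psubspace ::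
  "('k::field \<Rightarrow> 'v::ab_group_add \<Rightarrow> 'v) \<Rightarrow> ('v set \<Rightarrow> bool) \<Rightarrow> 'v set set \<Rightarrow> bool" where
  "psubspace scale sing X =
     (X \<subseteq> ppoints scale sing \<and>
      (\<forall>L\<in>plines scale sing.
         (\<exists>p\<in>X. \<exists>p'\<in>X. p \<noteq> p' \<and> p \<subseteq> L \<and> p' \<subseteq> L) \<longrightarrow>
         (\<forall>r\<in>ppoints scale sing. r \<subseteq> L \<longrightarrow> r \<in> X)))"

definition pcollinear ::
  "('k::field \<Rightarrow> 'v::ab_group_add \<Rightarrow> 'v) \<Rightarrow> ('v set \<Rightarrow> bool) \<Rightarrow> 'v set \<Rightarrow> 'v set \<Rightarrow> bool" where
  "pcollinear scale sing p r = (\<exists>L\<in>plines scale sing. p \<subseteq> L \<and> r \<subseteq> L)"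

definition psingular ::
  "('k::field \<Rightarrow> 'v::ab_group_add \<Rightarrow> 'v) \<Rightarrow> ('v set \<Rightarrow> bool) \<Rightarrow> 'v set set \<Rightarrow> bool" where
  "psingular scale sing S =
     (psubspace scale sing S \<and> (\<forall>p\<in>S. \<forall>r\<in>S. p \<noteq> r \<longrightarrow> pcollinear scale sing p r))"

definition pmax_singular ::
  "('k::field \<Rightarrow> 'v::ab_group_add \<Rightarrow> 'v) \<Rightarrow> ('v set \<Rightarrow> bool) \<Rightarrow> 'v set set \<Rightarrow> bool" where
  "pmax_singular scale sing M =
     (psingular scale sing M \<and> (\<forall>S. psingular scale sing S \<and> M \<subseteq> S \<longrightarrow> S = M))"

definition pnice ::
  "('k::field \<Rightarrow> 'v::ab_group_add \<Rightarrow> 'v) \<Rightarrow> ('v set \<Rightarrow> bool) \<Rightarrow> 'v set set \<Rightarrow> bool" where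
  "pnice scale sing X =
     (psubspace scale sing X \<and>
      (\<exists>M1 M2. pmax_singular scale sing M1 \<and> pmax_singular scale sing M2 \<and>
               M1 \<subseteq> X \<and> M2 \<subseteq> X \<and> M1 \<inter> M2 = {}))"

definition pg_span_points ::
  "('k::field \<Rightarrow> 'v::ab_group_add \<Rightarrow> 'v) \<Rightarrow> 'v set set \<Rightarrow> 'v set set" where
  "pg_span_points scale X = {vspan scale {v} | v. v \<noteq> 0 \<and> v \<in> vspan scale (\<Union>X)}"

end

theory Submission
  imports Defs
begin

text \<open>Choose disjoint maximal singular subspaces \<open>M1, M2 \<subseteq> X\<close>. Because the rank is at least 2,
  \<open>M1\<close> contains independent vectors \<open>e1, e2\<close> and, by maximality and disjointness, \<open>M2\<close>
  contains \<open>f1, f2\<close> with \<open>g(ei, fj) = [i = j]\<close>; they span a hyperbolic 4-space \<open>H\<close>.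
  For fixed \<open>u \<perp> H\<close>, the set of \<open>h \<in> H\<close> with \<open>\<langle>h + u\<rangle> \<in> X\<close> is closed under adding
  singular vectors of \<open>H\<close> perpendicular to \<open>h\<close>, and such moves connect any two vectors of \<open>H\<close>
  with the same value of \<open>Q\<close>. Starting from the four totally singular planes spanned by one
  \<open>e\<close> and one \<open>f\<close>-vector or by both \<open>e\<close>- or both \<open>f\<close>-vectors, all of which lie in \<open>X\<close>, this first
  puts every singular vector of \<open>H\<close> into \<open>X\<close>. Then the \<open>H\<^sup>\<perp>\<close>-components of the points of \<open>X\<close>
  form a subspace, so they include the \<open>H\<^sup>\<perp>\<close>-component \<open>u\<close> of every singular vector
  \<open>h + u\<close> of \<open>\<langle>X\<rangle>\<close>; since \<open>Q(h) = - Q(u)\<close> is also the \<open>Q\<close>-value of the \<open>H\<close>-part of a point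
  \<open>\<langle>h' + u\<rangle>\<close> of \<open>X\<close>, the point \<open>\<langle>h + u\<rangle>\<close> lies in \<open>X\<close>.\<close>

section \<open>Involutions and the trace\<close>

locale field_involution =
  fixes \<sigma> :: "'k::field \<Rightarrow> 'k"
  assumes conj_add: "\<sigma> (a + b) = \<sigma> a + \<sigma> b"
    and conj_mult: "\<sigma> (a * b) = \<sigma> a * \<sigma> b"
    and conj_conj [simp]: "\<sigma> (\<sigma> a) = a"
begin

lemma conj_0 [simp]: "\<sigma> 0 = 0"
  using conj_add[of 0 0] by (metis add_cancel_right_right)

lemma conj_eq_0_iff [simp]: "\<sigma> a = 0 \<longleftrightarrow> a = 0"
  by (metis conj_0 conj_conj)

lemma conj_1 [simp]: "\<sigma> 1 = 1"
proof -
  have "\<sigma> 1 * \<sigma> 1 = \<sigma> 1 * 1" using conj_mult[of 1 1] by simp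
  then show ?thesis by (metis conj_eq_0_iff mult_left_cancel zero_neq_one)
qed

lemma conj_minus [simp]: "\<sigma> (- a) = - \<sigma> a"
  using conj_add[of a "- a"] by (simp add: eq_neg_iff_add_eq_0 add.commute)

lemma conj_diff [simp]: "\<sigma> (a - b) = \<sigma> a - \<sigma> b"
  using conj_add[of a "- b"] by simp

lemma conj_inverse [simp]: "\<sigma> (inverse a) = inverse (\<sigma> a)"
proof (cases "a = 0")
  case False
  then have "\<sigma> a * \<sigma> (inverse a) = 1" using conj_mult[of a "inverse a"] by simp
  then show ?thesis by (metis inverse_unique)
qed simp

lemma conj_divide [simp]: "\<sigma> (a / b) = \<sigma> a / \<sigma> b"
  by (simp add: divide_inverse conj_mult)

declare conj_add [simp] conj_mult [simp]

text \<open>In characteristic 2 the element \<open>b + \<sigma> b\<close> is nonzero for any \<open>b\<close> not fixed by \<open>\<sigma>\<close>;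
  otherwise \<open>1 + \<sigma> 1 = 2\<close> already is. Dividing by it gives an element of trace 1.\<close>

lemma exists_trace_one:
  assumes "\<sigma> b \<noteq> b"
  shows "\<exists>a. a + \<sigma> a = 1"
proof -
  obtain t where t: "t + \<sigma> t \<noteq> 0"
  proof (cases "(1::'k) + 1 = 0")
    case True
    then have "- b = b" by (metis add.commute add_eq_0_iff2 distrib_right mult_1 mult_zero_left)
    then have "b + \<sigma> b \<noteq> 0" using assms by (metis add.commute eq_neg_iff_add_eq_0)
    then show ?thesis using that by blast
  next
    case False
    then show ?thesis using that[of 1] by simp
  qed
  have "\<sigma> (t / (t + \<sigma> t)) = \<sigma> t / (t + \<sigma> t)" by (simp add: add.commute)
  then have "t / (t + \<sigma> t) + \<sigma> (t / (t + \<sigma> t)) = 1"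
    using t by (simp add: add_divide_distrib[symmetric] add.commute)
  then show ?thesis by blast
qed

end

text \<open>The parameter \<open>\<delta>\<close> distinguishes the two kinds of forms treated uniformly below:
  \<open>\<delta> = 0\<close>, \<open>\<sigma> = id\<close> for quadratic forms and \<open>\<delta> = 1\<close> for Hermitian forms.\<close>

locale trace_field = field_involution \<sigma> for \<sigma> :: "'k::field \<Rightarrow> 'k" +
  fixes \<delta> :: 'k
  assumes quadratic_or_hermitian: "(\<delta> = 0 \<and> (\<forall>a. \<sigma> a = a)) \<or> (\<delta> = 1 \<and> (\<exists>a. a + \<sigma> a = 1))"
begin

lemma trace_surj:
  assumes "\<sigma> c = c"
  shows "\<exists>a. \<sigma> a + \<delta> * a = c"
  using quadratic_or_hermitian
proof
  assume "\<delta> = 1 \<and> (\<exists>a. a + \<sigma> a = 1)"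
  then obtain a where "\<delta> = 1" "a + \<sigma> a = 1" by blast
  have "\<sigma> (c * a) + \<delta> * (c * a) = c * (a + \<sigma> a)"
    using assms \<open>\<delta> = 1\<close> by (simp add: algebra_simps)
  also have "\<dots> = c" using \<open>a + \<sigma> a = 1\<close> by simp
  finally show ?thesis by blast
qed auto

lemma trace_zero_imp: "\<sigma> a + \<delta> * a = 0 \<Longrightarrow> \<sigma> a + a = 0"
  using quadratic_or_hermitian by auto

end

section \<open>Moves in a hyperbolic 4-space\<close>

text \<open>Coordinates \<open>(a1, a2, b1, b2)\<close> stand for \<open>a1 e1 + a2 e2 + b1 f1 + b2 f2\<close>, where
  \<open>e1, e2, f1, f2\<close> are two hyperbolic pairs; \<open>hform\<close> and \<open>hquad\<close> are the form and its
  quadratic map in these coordinates. A move adds to a vector a perpendicular vector of a given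
  kind; a set of vectors of a polar subspace is closed under moves by singular vectors, because
  the two summands then span a singular line.\<close>

context trace_field
begin

definition hform :: "'k \<Rightarrow> 'k \<Rightarrow> 'k \<Rightarrow> 'k \<Rightarrow> 'k \<Rightarrow> 'k \<Rightarrow> 'k \<Rightarrow> 'k \<Rightarrow> 'k" where
  "hform c1 c2 d1 d2 a1 a2 b1 b2 = c1 * \<sigma> b1 + c2 * \<sigma> b2 + d1 * \<sigma> a1 + d2 * \<sigma> a2"

definition hquad :: "'k \<Rightarrow> 'k \<Rightarrow> 'k \<Rightarrow> 'k \<Rightarrow> 'k" where
  "hquad a1 a2 b1 b2 = a1 * \<sigma> b1 + a2 * \<sigma> b2 + \<delta> * (b1 * \<sigma> a1 + b2 * \<sigma> a2)"

text \<open>The four totally singular planes \<open>\<langle>e1, e2\<rangle>\<close>, \<open>\<langle>f1, f2\<rangle>\<close>, \<open>\<langle>e1, f2\<rangle>\<close>, \<open>\<langle>e2, f1\<rangle>\<close>.\<close>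

definition frame_plane :: "'k \<Rightarrow> 'k \<Rightarrow> 'k \<Rightarrow> 'k \<Rightarrow> bool" where
  "frame_plane c1 c2 d1 d2 \<longleftrightarrow>
     (d1 = 0 \<and> d2 = 0) \<or> (c1 = 0 \<and> c2 = 0) \<or> (c2 = 0 \<and> d1 = 0) \<or> (c1 = 0 \<and> d2 = 0)"

definition move_closed ::
  "('k \<Rightarrow> 'k \<Rightarrow> 'k \<Rightarrow> 'k \<Rightarrow> bool) \<Rightarrow> ('k \<Rightarrow> 'k \<Rightarrow> 'k \<Rightarrow> 'k \<Rightarrow> bool) \<Rightarrow> bool" where
  "move_closed M P \<longleftrightarrow> (\<forall>a1 a2 b1 b2 c1 c2 d1 d2.
     P a1 a2 b1 b2 \<and> M c1 c2 d1 d2 \<and> hform c1 c2 d1 d2 a1 a2 b1 b2 = 0 \<longrightarrow>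
     P (a1 + c1) (a2 + c2) (b1 + d1) (b2 + d2))"

abbreviation plane_closed :: "('k \<Rightarrow> 'k \<Rightarrow> 'k \<Rightarrow> 'k \<Rightarrow> bool) \<Rightarrow> bool" where
  "plane_closed \<equiv> move_closed frame_plane"

abbreviation singular_closed :: "('k \<Rightarrow> 'k \<Rightarrow> 'k \<Rightarrow> 'k \<Rightarrow> bool) \<Rightarrow> bool" where
  "singular_closed \<equiv> move_closed (\<lambda>c1 c2 d1 d2. hquad c1 c2 d1 d2 = 0)"

lemma move_closedD:
  assumes "move_closed M P" "P a1 a2 b1 b2" "M c1 c2 d1 d2" "hform c1 c2 d1 d2 a1 a2 b1 b2 = 0"
    "a1' = a1 + c1" "a2' = a2 + c2" "b1' = b1 + d1" "b2' = b2 + d2"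
  shows "P a1' a2' b1' b2'"
  using assms unfolding move_closed_def by blast

lemma frame_plane_hquad: "frame_plane c1 c2 d1 d2 \<Longrightarrow> hquad c1 c2 d1 d2 = 0"
  unfolding frame_plane_def hquad_def by auto

lemma frame_plane_minus: "frame_plane c1 c2 d1 d2 \<Longrightarrow> frame_plane (- c1) (- c2) (- d1) (- d2)"
  unfolding frame_plane_def by auto

lemma move_closed_mono:
  "(\<And>c1 c2 d1 d2. M c1 c2 d1 d2 \<Longrightarrow> M' c1 c2 d1 d2) \<Longrightarrow> move_closed M' P \<Longrightarrow> move_closed M P"
  unfolding move_closed_def by blast

lemma hquad_minus [simp]: "hquad (- a1) (- a2) (- b1) (- b2) = hquad a1 a2 b1 b2"
  unfolding hquad_def by simp

lemma hquad_zero_axis [simp]: "hquad 0 0 b1 b2 = 0"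
  unfolding hquad_def by simp

lemma hform_self_if_hquad_zero: "hquad a1 a2 b1 b2 = 0 \<Longrightarrow> hform a1 a2 b1 b2 a1 a2 b1 b2 = 0"
  using quadratic_or_hermitian unfolding hquad_def hform_def by (auto simp: algebra_simps)

lemma hquad_add_perp:
  assumes "hform c1 c2 d1 d2 a1 a2 b1 b2 = 0"
  shows "hquad (a1 + c1) (a2 + c2) (b1 + d1) (b2 + d2) = hquad a1 a2 b1 b2 + hquad c1 c2 d1 d2"
  using quadratic_or_hermitian
proof
  assume "\<delta> = 0 \<and> (\<forall>a. \<sigma> a = a)"
  then have "\<delta> = 0" and sigma_id: "\<And>a. \<sigma> a = a" by auto
  have "c1 * b1 + c2 * b2 + d1 * a1 + d2 * a2 = 0" using assms unfolding hform_def sigma_id .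
  then show ?thesis unfolding hquad_def unfolding sigma_id \<open>\<delta> = 0\<close> by algebra
next
  assume "\<delta> = 1 \<and> (\<exists>a. a + \<sigma> a = 1)"
  moreover have "\<sigma> c1 * b1 + \<sigma> c2 * b2 + \<sigma> d1 * a1 + \<sigma> d2 * a2 = 0"
    using arg_cong[OF assms, of \<sigma>] unfolding hform_def by (simp only: conj_add conj_mult conj_conj conj_0)
  ultimately show ?thesis using assms unfolding hquad_def hform_def by (simp; algebra)
qed

lemma singular_closed_plane_closed: "singular_closed P \<Longrightarrow> plane_closed P"
  by (rule move_closed_mono[OF frame_plane_hquad])

text \<open>Moves by singular vectors can be undone, so closedness passes to the complement.\<close>

lemma move_closed_Not:
  assumes P: "move_closed M P"
    and M_minus: "\<And>c1 c2 d1 d2. M c1 c2 d1 d2 \<Longrightarrow> M (- c1) (- c2) (- d1) (- d2)"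
    and M_singular: "\<And>c1 c2 d1 d2. M c1 c2 d1 d2 \<Longrightarrow> hquad c1 c2 d1 d2 = 0"
  shows "move_closed M (\<lambda>a1 a2 b1 b2. \<not> P a1 a2 b1 b2)"
  unfolding move_closed_def
proof (intro allI impI notI, elim conjE)
  fix a1 a2 b1 b2 c1 c2 d1 d2
  assume "\<not> P a1 a2 b1 b2" and M: "M c1 c2 d1 d2" and perp: "hform c1 c2 d1 d2 a1 a2 b1 b2 = 0"
    and moved: "P (a1 + c1) (a2 + c2) (b1 + d1) (b2 + d2)"
  have "hform c1 c2 d1 d2 c1 c2 d1 d2 = 0"
    using hform_self_if_hquad_zero[OF M_singular[OF M]] .
  with perp have perp': "hform (- c1) (- c2) (- d1) (- d2) (a1 + c1) (a2 + c2) (b1 + d1) (b2 + d2) = 0"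
    unfolding hform_def by (simp; algebra)
  have "P (a1 + c1 + - c1) (a2 + c2 + - c2) (b1 + d1 + - d1) (b2 + d2 + - d2)"
    by (rule move_closedD[OF P moved M_minus[OF M] perp']) simp_all
  then show False using \<open>\<not> P a1 a2 b1 b2\<close> by simp
qed

lemma move_closed_level:
  assumes "move_closed M P" and "\<And>c1 c2 d1 d2. M c1 c2 d1 d2 \<Longrightarrow> hquad c1 c2 d1 d2 = 0"
  shows "move_closed M (\<lambda>a1 a2 b1 b2. P a1 a2 b1 b2 \<and> hquad a1 a2 b1 b2 = k)"
  using assms hquad_add_perp unfolding move_closed_def by auto

lemma plane_closed_rescale:
  assumes P: "plane_closed P" and "P x 0 y 0"
  shows "P 1 0 (x * \<sigma> y) 0"
proof -
  let ?z = "x * \<sigma> y"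
  have 1: "P x 1 y 0"
    by (rule move_closedD[OF P \<open>P x 0 y 0\<close>, of 0 1 0 0]) (simp_all add: frame_plane_def hform_def)
  have 2: "P 0 1 y ?z"
    by (rule move_closedD[OF P 1, of "- x" 0 0 ?z]) (simp_all add: frame_plane_def hform_def)
  have 3: "P 0 1 0 ?z"
    by (rule move_closedD[OF P 2, of 0 0 "- y" 0]) (simp_all add: frame_plane_def hform_def)
  have 4: "P 1 1 0 ?z"
    by (rule move_closedD[OF P 3, of 1 0 0 0]) (simp_all add: frame_plane_def hform_def)
  have 5: "P 1 1 ?z 0"
    by (rule move_closedD[OF P 4, of 0 0 ?z "- ?z"]) (simp_all add: frame_plane_def hform_def)
  show ?thesis
    by (rule move_closedD[OF P 5, of 0 "- 1" 0 0]) (simp_all add: frame_plane_def hform_def)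
qed

lemma plane_closed_reaches_axis:
  assumes P: "plane_closed P" and "P x1 x2 y1 y2" and "x1 \<noteq> 0 \<or> x2 \<noteq> 0"
  shows "\<exists>z. P 1 0 z 0"
proof -
  obtain a1 a2 b1 b2 where A: "P a1 a2 b1 b2" "a1 \<noteq> 0"
  proof (cases "x1 = 0")
    case True
    with assms(3) have "x2 \<noteq> 0" by simp
    have "P 1 x2 y1 (y2 - \<sigma> y1 / \<sigma> x2)"
      by (rule move_closedD[OF P \<open>P x1 x2 y1 y2\<close>, of 1 0 0 "- \<sigma> y1 / \<sigma> x2"])
        (use True \<open>x2 \<noteq> 0\<close> in \<open>simp_all add: frame_plane_def hform_def\<close>)
    then show ?thesis using that by simp
  qed (use that assms(2) in blast)
  let ?b = "a2 * \<sigma> b2 / \<sigma> a1"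
  have B: "P a1 0 (b1 + ?b) b2"
    by (rule move_closedD[OF P A(1), of 0 "- a2" ?b 0])
      (use A(2) in \<open>simp_all add: frame_plane_def hform_def\<close>)
  have "P a1 0 (b1 + ?b) 0"
    by (rule move_closedD[OF P B, of 0 0 0 "- b2"]) (simp_all add: frame_plane_def hform_def)
  then show ?thesis using plane_closed_rescale[OF P] by blast
qed

lemma singular_closed_axis_trace:
  assumes P: "singular_closed P" and "P 1 0 z 0" and trace: "\<sigma> z + \<delta> * z = \<sigma> z' + \<delta> * z'"
  shows "P 1 0 z' 0"
proof -
  define d where "d = z' - z"
  have d: "\<sigma> d + \<delta> * d = 0" using trace unfolding d_def by (simp add: algebra_simps)
  have 1: "P 1 1 z 0"
    by (rule move_closedD[OF P \<open>P 1 0 z 0\<close>, of 0 1 0 0]) (simp_all add: hquad_def hform_def)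
  have 2: "P 1 1 z' (- d)"
    by (rule move_closedD[OF P 1, of 0 0 d "- d"]) (simp_all add: hquad_def hform_def d_def)
  show ?thesis
  proof (rule move_closedD[OF P 2, of 0 "- 1" 0 d])
    show "hquad 0 (- 1) 0 d = 0" using d unfolding hquad_def by (simp; algebra)
    show "hform 0 (- 1) 0 d 1 1 z' (- d) = 0"
      using trace_zero_imp[OF d] unfolding hform_def by (simp; algebra)
  qed simp_all
qed

text \<open>The heart of the connectivity argument: a set closed under singular moves is a union of
  level sets of \<open>hquad\<close>. Nonzero levels are reached from the axis \<open>(1, 0, z, 0)\<close>, where
  \<open>hquad\<close> is the trace of \<open>z\<close>, and the level zero contains the origin.\<close>

lemma singular_closed_level_set:
  assumes P: "singular_closed P" and "P a1 a2 b1 b2" and level: "hquad a1 a2 b1 b2 = hquad c1 c2 d1 d2"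
  shows "P c1 c2 d1 d2"
proof (cases "hquad a1 a2 b1 b2 = 0")
  case True
  have "P (a1 + - a1) (a2 + - a2) (b1 + - b1) (b2 + - b2)"
  proof (rule move_closedD[OF P \<open>P a1 a2 b1 b2\<close>])
    show "hform (- a1) (- a2) (- b1) (- b2) a1 a2 b1 b2 = 0"
      using hform_self_if_hquad_zero[OF True] unfolding hform_def by (simp; algebra)
  qed (use True in simp_all)
  then have origin: "P 0 0 0 0" by simp
  show ?thesis
    by (rule move_closedD[OF P origin, of c1 c2 d1 d2]) (use True level in \<open>simp_all add: hform_def\<close>)
next
  case False
  let ?k = "hquad a1 a2 b1 b2"
  have "a1 \<noteq> 0 \<or> a2 \<noteq> 0" "c1 \<noteq> 0 \<or> c2 \<noteq> 0" using False level by auto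
  have level_closed: "plane_closed (\<lambda>a1 a2 b1 b2. R a1 a2 b1 b2 \<and> hquad a1 a2 b1 b2 = ?k)"
    if "singular_closed R" for R
    using singular_closed_plane_closed[OF move_closed_level[OF that]] by simp
  note reach = plane_closed_reaches_axis[OF level_closed]
  obtain z where z: "P 1 0 z 0" "hquad 1 0 z 0 = ?k"
    using reach[OF P] assms(2) \<open>a1 \<noteq> 0 \<or> a2 \<noteq> 0\<close> by blast
  show ?thesis
  proof (rule ccontr)
    assume "\<not> P c1 c2 d1 d2"
    moreover have "singular_closed (\<lambda>a1 a2 b1 b2. \<not> P a1 a2 b1 b2)"
      by (rule move_closed_Not[OF P]) auto
    ultimately obtain z' where "\<not> P 1 0 z' 0" "hquad 1 0 z' 0 = ?k"
      using reach[of _ c1 c2 d1 d2] level \<open>c1 \<noteq> 0 \<or> c2 \<noteq> 0\<close> by auto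
    moreover have "\<sigma> z + \<delta> * z = \<sigma> z' + \<delta> * z'" using z(2) \<open>hquad 1 0 z' 0 = ?k\<close>
      unfolding hquad_def by simp
    ultimately show False using singular_closed_axis_trace[OF P z(1)] by blast
  qed
qed

end

context vector_space
begin

lemma in_span_pair_iff: "x \<in> span {p, r} \<longleftrightarrow> (\<exists>a b. x = a *s p + b *s r)"
proof
  assume "x \<in> span {p, r}"
  then obtain a b where "x - a *s p = b *s r" unfolding span_insert span_singleton by auto
  then show "\<exists>a b. x = a *s p + b *s r" by (metis add.commute diff_add_cancel)
qed (auto intro: span_add span_scale span_base)

lemma span_singleton_eq:
  assumes "w \<in> span {v}" "w \<noteq> 0"
  shows "span {w} = span {v}"
proof -
  obtain k where k: "w = k *s v" using assms(1) span_singleton by auto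
  with assms(2) have "v = inverse k *s w" by auto
  then have "v \<in> span {w}" by (simp add: span_base span_scale)
  then show ?thesis using assms(1) by (simp add: span_eq)
qed

lemma span_singleton_scale: "c \<noteq> 0 \<Longrightarrow> span {c *s v} = span {v}"
  by (cases "v = 0") (simp, rule span_singleton_eq, auto intro: span_scale span_base)

lemma in_span_singleton_swap: "x \<noteq> 0 \<Longrightarrow> x \<in> span {y} \<Longrightarrow> y \<in> span {x}"
  using span_singleton_eq[of x y] span_base[of y "{y}"] by auto

lemma independent_pair:
  assumes "p \<noteq> 0" "r \<notin> span {p}"
  shows "independent {p, r}"
proof -
  have "r \<noteq> p" "r \<noteq> 0" using assms(2) span_base[of p "{p}"] span_zero by auto
  moreover have "p \<notin> span {r}" using assms in_span_singleton_swap by blast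
  ultimately show ?thesis using assms by (simp add: independent_insert)
qed

lemma independent_pairD:
  assumes "independent {a, b}" "a \<noteq> b"
  shows "a \<noteq> 0" "b \<notin> span {a}"
proof -
  show "a \<noteq> 0" using assms(1) dependent_zero[of "{a, b}"] by blast
  show "b \<notin> span {a}"
    using assms in_span_singleton_swap by (simp add: independent_insert) blast
qed

lemma span_subset_span_pair:
  assumes S: "finite S" "card S = 2"
    and z: "z1 \<in> span S" "z2 \<in> span S" "z1 \<noteq> 0" "z2 \<notin> span {z1}"
  shows "span S \<subseteq> span {z1, z2}"
proof
  fix y assume "y \<in> span S"
  show "y \<in> span {z1, z2}"
  proof (rule ccontr)
    assume "y \<notin> span {z1, z2}"
    moreover have "z1 \<noteq> z2" using z(4) span_base[of z1 "{z1}"] by auto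
    moreover have "y \<noteq> z1" "y \<noteq> z2" using \<open>y \<notin> span {z1, z2}\<close> span_base[of _ "{z1, z2}"] by auto
    ultimately have "independent {y, z1, z2}" "card {y, z1, z2} = 3"
      using independent_pair[OF z(3,4)] by (auto simp: independent_insertI)
    moreover have "{y, z1, z2} \<subseteq> span S" using \<open>y \<in> span S\<close> z(1,2) by blast
    ultimately show False using independent_span_bound[OF S(1)] S(2) by fastforce
  qed
qed

lemma independent_pair_coeffs:
  assumes "independent {a, b}" "a \<noteq> b" "x *s a + y *s b = 0"
  shows "x = 0 \<and> y = 0"
proof (cases "y = 0")
  case True
  then show ?thesis using assms independent_pairD(1) by auto
next
  case False
  from assms(3) have "y *s b = - (x *s a)" by (simp add: eq_neg_iff_add_eq_0 add.commute)
  with False have "b = inverse y *s - (x *s a)" by (metis scale_scale scale_one left_inverse)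
  then have "b \<in> span {a}" by (simp add: span_base span_scale span_neg)
  with independent_pairD(2)[OF assms(1,2)] show ?thesis by blast
qed

end

section \<open>Sesquilinear forms with a quadratic map\<close>

text \<open>A Hermitian form \<open>f\<close> is covered by \<open>g = f\<close>, \<open>Q v = f v v\<close>, \<open>\<delta> = 1\<close>; a quadratic form
  \<open>q\<close> by its bilinearization \<open>g\<close>, \<open>Q = q\<close>, \<open>\<delta> = 0\<close>, \<open>\<sigma> = id\<close>.\<close>

locale polar_form = trace_field \<sigma> \<delta> + vector_space scale
  for \<sigma> :: "'k::field \<Rightarrow> 'k" and \<delta> :: 'k and scale :: "'k \<Rightarrow> 'v::ab_group_add \<Rightarrow> 'v" (infixr \<open>*s\<close> 75) +
  fixes sing :: "'v set \<Rightarrow> bool" and g :: "'v \<Rightarrow> 'v \<Rightarrow> 'k" and Q :: "'v \<Rightarrow> 'k"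
  assumes form_add_left: "g (u + u') v = g u v + g u' v"
    and form_scale_left: "g (a *s u) v = a * g u v"
    and form_swap: "g v u = \<sigma> (g u v)"
    and quad_add: "Q (u + v) = Q u + Q v + g u v + \<delta> * g v u"
    and quad_scale: "Q (a *s v) = a * \<sigma> a * Q v"
    and form_diag_if_quad_zero: "Q v = 0 \<Longrightarrow> g v v = 0"
    and conj_quad: "\<sigma> (Q v) = Q v"
    and sing_span_iff: "sing (span A) \<longleftrightarrow>
      (\<forall>v\<in>span A. Q v = 0) \<and> (\<forall>u\<in>span A. \<forall>v\<in>span A. g u v = 0)"
begin

lemma form_add_right: "g u (v + w) = g u v + g u w"
  by (metis form_add_left form_swap conj_add)

lemma form_scale_right: "g u (a *s v) = \<sigma> a * g u v"
  by (metis form_scale_left form_swap conj_mult conj_conj)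

lemma form_zero_left [simp]: "g 0 v = 0"
  using form_scale_left[of 0 v] by simp

lemma form_zero_right [simp]: "g v 0 = 0"
  using form_scale_right[of v 0] by simp

lemma form_minus_left: "g (- u) v = - g u v"
  using form_add_left[of "- u" u v] by (simp add: eq_neg_iff_add_eq_0)

lemma form_minus_right: "g u (- v) = - g u v"
  by (metis form_minus_left form_swap conj_minus)

lemma form_diff_left: "g (u - w) v = g u v - g w v"
  using form_add_left[of u "- w" v] form_minus_left[of w v] by simp

lemma form_diff_right: "g u (v - w) = g u v - g u w"
  using form_add_right[of u v "- w"] form_minus_right[of u w] by simp

lemmas form_simps = form_add_left form_add_right form_scale_left form_scale_right
  form_minus_left form_minus_right form_diff_left form_diff_right

lemma form_eq_0_swap: "g u v = 0 \<longleftrightarrow> g v u = 0"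
  using form_swap[of u v] by simp

lemma quad_zero [simp]: "Q 0 = 0"
  using quad_scale[of 0 0] by simp

lemma quad_add_perp: "g u v = 0 \<Longrightarrow> Q (u + v) = Q u + Q v"
  using quad_add[of u v] form_eq_0_swap by simp

lemma sing_span_quad: "sing (span A) \<Longrightarrow> v \<in> span A \<Longrightarrow> Q v = 0"
  using sing_span_iff by auto

lemma sing_span_form: "sing (span A) \<Longrightarrow> u \<in> span A \<Longrightarrow> v \<in> span A \<Longrightarrow> g u v = 0"
  using sing_span_iff by auto

lemma sing_span_pair:
  assumes "Q p = 0" "Q r = 0" "g p r = 0"
  shows "sing (span {p, r})"
proof -
  have "g r p = 0" "g p p = 0" "g r r = 0"
    using assms form_eq_0_swap form_diag_if_quad_zero by auto
  with assms have "Q (a *s p + b *s r) = 0" "g (a *s p + b *s r) (c *s p + d *s r) = 0"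
    for a b c d by (simp_all add: quad_add quad_scale form_simps)
  then show ?thesis unfolding sing_span_iff by (auto simp: in_span_pair_iff)
qed

lemma sing_span_singleton_iff: "sing (span {v}) \<longleftrightarrow> Q v = 0"
  using sing_span_quad[of "{v}" v] sing_span_pair[of v v] form_diag_if_quad_zero
  by (auto intro: span_base)

lemma ppointsI: "v \<noteq> 0 \<Longrightarrow> Q v = 0 \<Longrightarrow> span {v} \<in> ppoints scale sing"
  unfolding ppoints_def vspan_def using sing_span_singleton_iff by auto

lemma ppointsE:
  assumes "p \<in> ppoints scale sing"
  obtains v where "v \<noteq> 0" "Q v = 0" "p = span {v}"
  using assms unfolding ppoints_def vspan_def using sing_span_singleton_iff by auto

lemma plinesI:
  assumes "p \<noteq> 0" "r \<notin> span {p}" "sing (span {p, r})"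
  shows "span {p, r} \<in> plines scale sing"
proof -
  have "r \<noteq> p" using assms(2) span_base[of p "{p}"] by auto
  then have "card {p, r} = 2" by simp
  then show ?thesis unfolding plines_def vspan_def vindep_def
    using independent_pair[OF assms(1,2)] assms(3) by blast
qed

section \<open>Subspaces and singular subspaces of the polar space\<close>

definition vecs :: "'v set set \<Rightarrow> 'v set" where
  "vecs X = {v. v \<noteq> 0 \<longrightarrow> span {v} \<in> X}"

definition points_of :: "'v set \<Rightarrow> 'v set set" where
  "points_of T = {span {z} | z. z \<in> T \<and> z \<noteq> 0}"

definition tot_singular :: "'v set \<Rightarrow> bool" where
  "tot_singular T \<longleftrightarrow> (\<forall>v\<in>T. Q v = 0) \<and> (\<forall>u\<in>T. \<forall>v\<in>T. g u v = 0)"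

lemma zero_in_vecs [simp]: "0 \<in> vecs X"
  unfolding vecs_def by simp

lemma vecs_mono: "M \<subseteq> X \<Longrightarrow> vecs M \<subseteq> vecs X"
  unfolding vecs_def by blast

lemma in_vecs_points_of: "v \<in> T \<Longrightarrow> v \<in> vecs (points_of T)"
  unfolding vecs_def points_of_def by blast

lemma psubspace_vecs_quad:
  assumes "psubspace scale sing X" "v \<in> vecs X"
  shows "Q v = 0"
proof (cases "v = 0")
  case False
  with assms have "span {v} \<in> ppoints scale sing" unfolding vecs_def psubspace_def by blast
  then obtain w where "Q w = 0" "span {v} = span {w}" by (rule ppointsE)
  moreover have "v \<in> span {v}" by (rule span_base) simp
  ultimately obtain k where "v = k *s w" "Q w = 0" by (auto simp: span_singleton)
  then show ?thesis by (simp add: quad_scale)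
qed simp

lemma psubspace_line_closed:
  assumes X: "psubspace scale sing X" and p: "p \<in> vecs X" and r: "r \<in> vecs X" and "g p r = 0"
  shows "a *s p + b *s r \<in> vecs X"
  unfolding vecs_def
proof (intro CollectI impI)
  let ?v = "a *s p + b *s r"
  assume "?v \<noteq> 0"
  show "span {?v} \<in> X"
  proof (cases "p = 0")
    case True
    then have "r \<noteq> 0" "b \<noteq> 0" using \<open>?v \<noteq> 0\<close> by auto
    then show ?thesis using r True unfolding vecs_def by (simp add: span_singleton_scale)
  next
    case p0: False
    show ?thesis
    proof (cases "r \<in> span {p}")
      case True
      then have "?v \<in> span {p}" by (simp add: span_add span_scale span_base)
      then have "span {?v} = span {p}" using span_singleton_eq \<open>?v \<noteq> 0\<close> by blast
      then show ?thesis using p p0 unfolding vecs_def by simp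
    next
      case False
      have sing: "sing (span {p, r})"
        using sing_span_pair psubspace_vecs_quad[OF X p] psubspace_vecs_quad[OF X r] \<open>g p r = 0\<close> .
      have "?v \<in> span {p, r}" using in_span_pair_iff by blast
      then have "span {?v} \<subseteq> span {p, r}" by (intro span_minimal) simp_all
      moreover have "span {?v} \<in> ppoints scale sing"
        using ppointsI[OF \<open>?v \<noteq> 0\<close>] sing_span_quad[OF sing \<open>?v \<in> span {p, r}\<close>] .
      moreover have "span {p} \<noteq> span {r}" "r \<noteq> 0"
        using False span_base[of r "{r}"] span_zero by auto
      ultimately show ?thesis
        using X plinesI[OF p0 False sing] p r p0 span_mono[of "{p}" "{p, r}"] span_mono[of "{r}" "{p, r}"]
        unfolding psubspace_def vecs_def by blast
    qed
  qed
qed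

lemma psingular_form_zero:
  assumes M: "psingular scale sing M" and "u \<in> vecs M" "v \<in> vecs M"
  shows "g u v = 0"
proof (cases "u = 0 \<or> v = 0")
  case False
  then have u: "span {u} \<in> M" and v: "span {v} \<in> M" using assms(2,3) unfolding vecs_def by auto
  show ?thesis
  proof (cases "span {u} = span {v}")
    case True
    then have "v \<in> span {u}" using span_base[of v "{v}"] by simp
    then obtain k where "v = k *s u" by (auto simp: span_singleton)
    moreover have "Q u = 0" using M assms(2) psubspace_vecs_quad unfolding psingular_def by blast
    ultimately show ?thesis using form_diag_if_quad_zero by (simp add: form_scale_right)
  next
    case False
    then obtain L where "L \<in> plines scale sing" "span {u} \<subseteq> L" "span {v} \<subseteq> L"
      using M u v unfolding psingular_def pcollinear_def by blast
    moreover from this(1) obtain S where "L = span S" "sing (span S)"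
      unfolding plines_def vspan_def by blast
    ultimately show ?thesis using sing_span_form span_base by blast
  qed
qed auto

lemma psingular_vecs_subspace:
  assumes M: "psingular scale sing M"
  shows "subspace (vecs M)"
proof -
  have "psubspace scale sing M" using M unfolding psingular_def by blast
  then have comb: "a *s u + b *s v \<in> vecs M" if "u \<in> vecs M" "v \<in> vecs M" for a b u v
    using psubspace_line_closed psingular_form_zero[OF M] that by blast
  show ?thesis
    unfolding subspace_def using comb[of _ _ 1 1] comb[of _ _ _ 0] by simp
qed

lemma psingular_tot_singular:
  assumes "psingular scale sing M"
  shows "tot_singular (vecs M)"
proof -
  have "psubspace scale sing M" using assms unfolding psingular_def by blast
  then show ?thesis unfolding tot_singular_def
    using psubspace_vecs_quad psingular_form_zero[OF assms] by blast
qed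

lemma psubspace_points_of:
  assumes T: "subspace T" "tot_singular T"
  shows "psubspace scale sing (points_of T)"
  unfolding psubspace_def
proof (intro conjI ballI impI)
  show "points_of T \<subseteq> ppoints scale sing"
    using T(2) ppointsI unfolding points_of_def tot_singular_def by auto
  fix L r
  assume L: "L \<in> plines scale sing" and r: "r \<in> ppoints scale sing" "r \<subseteq> L"
    and "\<exists>p\<in>points_of T. \<exists>p'\<in>points_of T. p \<noteq> p' \<and> p \<subseteq> L \<and> p' \<subseteq> L"
  then obtain p p' where "p \<in> points_of T" "p' \<in> points_of T" "p \<noteq> p'" "p \<subseteq> L" "p' \<subseteq> L"
    by blast
  then obtain z1 z2 where z: "z1 \<in> T" "z2 \<in> T" "z1 \<noteq> 0" "z2 \<noteq> 0" "span {z1} \<noteq> span {z2}"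
    "span {z1} \<subseteq> L" "span {z2} \<subseteq> L"
    unfolding points_of_def by blast
  obtain y where y: "y \<noteq> 0" "r = span {y}" using r(1) by (rule ppointsE)
  obtain S where S: "L = span S" "finite S" "card S = 2"
    using L unfolding plines_def vspan_def by blast
  have "z1 \<in> span {z1}" "z2 \<in> span {z2}" "y \<in> span {y}" by (simp_all add: span_base)
  then have "z1 \<in> span S" "z2 \<in> span S" "y \<in> span S" using z(6,7) y(2) r(2) S(1) by blast+
  note \<open>y \<in> span S\<close>
  also have "span S \<subseteq> span {z1, z2}"
    using span_subset_span_pair[OF S(2,3) \<open>z1 \<in> span S\<close> \<open>z2 \<in> span S\<close> z(3)] z(4,5)
      span_singleton_eq by blast
  also have "\<dots> \<subseteq> T" using z(1,2) T(1) by (simp add: span_minimal)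
  finally show "r \<in> points_of T" using y unfolding points_of_def by blast
qed

lemma psingular_points_of:
  assumes T: "subspace T" "tot_singular T"
  shows "psingular scale sing (points_of T)"
  unfolding psingular_def
proof (intro conjI ballI impI psubspace_points_of[OF T])
  fix p r assume "p \<in> points_of T" "r \<in> points_of T" "p \<noteq> r"
  then obtain z1 z2 where z: "p = span {z1}" "r = span {z2}" "z1 \<in> T" "z2 \<in> T" "z1 \<noteq> 0" "z2 \<noteq> 0"
    unfolding points_of_def by blast
  have "sing (span {z1, z2})" using T(2) z(3,4) sing_span_pair unfolding tot_singular_def by blast
  moreover have "z2 \<notin> span {z1}" using span_singleton_eq \<open>p \<noteq> r\<close> z(1,2,6) by metis
  ultimately have "span {z1, z2} \<in> plines scale sing" using plinesI z(5) by blast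
  moreover have "p \<subseteq> span {z1, z2}" "r \<subseteq> span {z1, z2}" unfolding z(1,2) by (simp_all add: span_mono)
  ultimately show "pcollinear scale sing p r" unfolding pcollinear_def by blast
qed

lemma tot_singular_span_insert:
  assumes S: "subspace S" "tot_singular S" and v: "Q v = 0" "\<And>w. w \<in> S \<Longrightarrow> g v w = 0"
  shows "tot_singular (span (insert v S))"
proof -
  have "span S = S" using S(1) by simp
  have decomp: "\<exists>w k. x = w + k *s v \<and> w \<in> S" if "x \<in> span (insert v S)" for x
  proof -
    have "\<exists>k. x - k *s v \<in> S" using that by (simp add: span_insert \<open>span S = S\<close>)
    then obtain k where "x - k *s v \<in> S" ..
    then show ?thesis by (intro exI[of _ "x - k *s v"] exI[of _ k]) simp
  qed
  have perp: "g w v = 0" "g v w = 0" if "w \<in> S" for w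
    using v(2)[OF that] form_eq_0_swap by auto
  have "g v v = 0" using form_diag_if_quad_zero[OF v(1)] .
  show ?thesis unfolding tot_singular_def
  proof (intro conjI ballI)
    fix x assume "x \<in> span (insert v S)"
    then obtain w k where "x = w + k *s v" "w \<in> S" using decomp by blast
    moreover have "Q w = 0" using S(2) \<open>w \<in> S\<close> unfolding tot_singular_def by blast
    ultimately show "Q x = 0" using v(1) perp \<open>g v v = 0\<close> by (simp add: quad_add quad_scale form_simps)
  next
    fix x y assume "x \<in> span (insert v S)" "y \<in> span (insert v S)"
    then obtain w k w' k' where "x = w + k *s v" "y = w' + k' *s v" "w \<in> S" "w' \<in> S"
      using decomp by meson
    moreover have "g w w' = 0" using S(2) \<open>w \<in> S\<close> \<open>w' \<in> S\<close> unfolding tot_singular_def by blast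
    ultimately show "g x y = 0" using perp \<open>g v v = 0\<close> by (simp add: form_simps)
  qed
qed

lemma pmax_singular_perp:
  assumes M: "pmax_singular scale sing M" and "Q v = 0" and perp: "\<And>w. w \<in> vecs M \<Longrightarrow> g v w = 0"
  shows "v \<in> vecs M"
proof -
  let ?T = "span (insert v (vecs M))"
  have M_sing: "psingular scale sing M" using M unfolding pmax_singular_def by blast
  have "tot_singular ?T"
    using tot_singular_span_insert psingular_vecs_subspace[OF M_sing] psingular_tot_singular[OF M_sing]
      \<open>Q v = 0\<close> perp by blast
  then have "psingular scale sing (points_of ?T)" using psingular_points_of subspace_span by blast
  moreover have "M \<subseteq> points_of ?T"
  proof
    fix q assume "q \<in> M"
    moreover from this obtain w where "w \<noteq> 0" "q = span {w}"
      using M_sing unfolding psingular_def psubspace_def by (blast elim: ppointsE)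
    ultimately show "q \<in> points_of ?T"
      unfolding points_of_def vecs_def by (blast intro: span_base)
  qed
  ultimately have "points_of ?T = M" using M unfolding pmax_singular_def by blast
  then show ?thesis using in_vecs_points_of[of v ?T] by (simp add: span_base)
qed

lemma vecs_scale: "v \<in> vecs X \<Longrightarrow> c *s v \<in> vecs X"
  unfolding vecs_def by (cases "c = 0") (auto simp: span_singleton_scale)

definition hyperbolic_pairs :: "'v \<Rightarrow> 'v \<Rightarrow> 'v \<Rightarrow> 'v \<Rightarrow> bool" where
  "hyperbolic_pairs e1 e2 f1 f2 \<longleftrightarrow>
     Q e1 = 0 \<and> Q e2 = 0 \<and> Q f1 = 0 \<and> Q f2 = 0 \<and>
     g e1 e2 = 0 \<and> g f1 f2 = 0 \<and> g e1 f2 = 0 \<and> g e2 f1 = 0 \<and> g e1 f1 = 1 \<and> g e2 f2 = 1"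

end

section \<open>A polar subspace containing two hyperbolic pairs\<close>

locale hyperbolic_frame = polar_form \<sigma> \<delta> scale sing g Q
  for \<sigma> :: "'k::field \<Rightarrow> 'k" and \<delta> :: 'k and scale :: "'k \<Rightarrow> 'v::ab_group_add \<Rightarrow> 'v" (infixr \<open>*s\<close> 75)
    and sing :: "'v set \<Rightarrow> bool" and g :: "'v \<Rightarrow> 'v \<Rightarrow> 'k" and Q :: "'v \<Rightarrow> 'k" +
  fixes X :: "'v set set" and e1 e2 f1 f2 :: 'v
  assumes psubspace_X: "psubspace scale sing X"
    and frame_in_X: "e1 \<in> vecs X" "e2 \<in> vecs X" "f1 \<in> vecs X" "f2 \<in> vecs X"
    and frame_pairs: "hyperbolic_pairs e1 e2 f1 f2"
begin

lemma frame_quad: "Q e1 = 0" "Q e2 = 0" "Q f1 = 0" "Q f2 = 0"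
  using frame_pairs unfolding hyperbolic_pairs_def by auto

lemma frame_form:
  "g e1 e1 = 0" "g e2 e2 = 0" "g f1 f1 = 0" "g f2 f2 = 0"
  "g e1 e2 = 0" "g f1 f2 = 0" "g e1 f2 = 0" "g e2 f1 = 0" "g e1 f1 = 1" "g e2 f2 = 1"
  "g e2 e1 = 0" "g f2 f1 = 0" "g f2 e1 = 0" "g f1 e2 = 0" "g f1 e1 = 1" "g f2 e2 = 1"
  using frame_pairs form_diag_if_quad_zero frame_quad form_swap[of e2 e1] form_swap[of f2 f1]
    form_swap[of f2 e1] form_swap[of f1 e2] form_swap[of f1 e1] form_swap[of f2 e2]
  unfolding hyperbolic_pairs_def by simp_all

definition hvec :: "'k \<Rightarrow> 'k \<Rightarrow> 'k \<Rightarrow> 'k \<Rightarrow> 'v" where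
  "hvec a1 a2 b1 b2 = a1 *s e1 + a2 *s e2 + b1 *s f1 + b2 *s f2"

lemma form_hvec: "g (hvec c1 c2 d1 d2) (hvec a1 a2 b1 b2) = hform c1 c2 d1 d2 a1 a2 b1 b2"
  unfolding hvec_def hform_def by (simp add: form_simps frame_form)

lemma quad_hvec: "Q (hvec a1 a2 b1 b2) = hquad a1 a2 b1 b2"
  unfolding hvec_def hquad_def by (simp add: quad_add quad_scale form_simps frame_form frame_quad; algebra)

lemma hvec_add: "hvec a1 a2 b1 b2 + hvec c1 c2 d1 d2 = hvec (a1 + c1) (a2 + c2) (b1 + d1) (b2 + d2)"
  unfolding hvec_def by (simp add: algebra_simps)

lemma scale_hvec: "c *s hvec a1 a2 b1 b2 = hvec (c * a1) (c * a2) (c * b1) (c * b2)"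
  unfolding hvec_def by (simp add: algebra_simps)

lemma hvec_zero [simp]: "hvec 0 0 0 0 = 0"
  unfolding hvec_def by simp

lemma form_hvec_frame:
  "g (hvec a1 a2 b1 b2) e1 = b1" "g (hvec a1 a2 b1 b2) e2 = b2"
  "g (hvec a1 a2 b1 b2) f1 = a1" "g (hvec a1 a2 b1 b2) f2 = a2"
  unfolding hvec_def by (simp_all add: form_simps frame_form)

definition perp_frame :: "'v \<Rightarrow> bool" where
  "perp_frame u \<longleftrightarrow> g u e1 = 0 \<and> g u e2 = 0 \<and> g u f1 = 0 \<and> g u f2 = 0"

lemma perp_frame_form:
  assumes "perp_frame u"
  shows "g u (hvec a1 a2 b1 b2) = 0" "g (hvec a1 a2 b1 b2) u = 0"
proof -
  show "g u (hvec a1 a2 b1 b2) = 0" using assms unfolding perp_frame_def hvec_def by (simp add: form_simps)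
  then show "g (hvec a1 a2 b1 b2) u = 0" using form_eq_0_swap by blast
qed

lemma perp_frame_quad: "perp_frame u \<Longrightarrow> Q (hvec a1 a2 b1 b2 + u) = hquad a1 a2 b1 b2 + Q u"
  using quad_add_perp[OF perp_frame_form(2)] quad_hvec by simp

lemma perp_frame_add: "perp_frame u \<Longrightarrow> perp_frame v \<Longrightarrow> perp_frame (u + v)"
  unfolding perp_frame_def by (simp add: form_add_left)

lemma perp_frame_scale: "perp_frame u \<Longrightarrow> perp_frame (c *s u)"
  unfolding perp_frame_def by (simp add: form_scale_left)

lemma hvec_in_X_if_perp_parts:
  assumes "a1 * \<sigma> b1 + a2 * \<sigma> b2 = 0"
  shows "hvec a1 a2 b1 b2 \<in> vecs X"
proof -
  have e: "a1 *s e1 + a2 *s e2 \<in> vecs X" and f: "b1 *s f1 + b2 *s f2 \<in> vecs X"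
    using psubspace_line_closed[OF psubspace_X] frame_in_X frame_form by auto
  have "g (a1 *s e1 + a2 *s e2) (b1 *s f1 + b2 *s f2) = 0"
    using assms by (simp add: form_simps frame_form mult.commute)
  from psubspace_line_closed[OF psubspace_X e f this, of 1 1] show ?thesis
    unfolding hvec_def by (simp add: add.assoc)
qed

lemma frame_plane_in_X: "frame_plane c1 c2 d1 d2 \<Longrightarrow> hvec c1 c2 d1 d2 \<in> vecs X"
  unfolding frame_plane_def by (rule hvec_in_X_if_perp_parts) auto

lemma singular_move_in_X:
  assumes "hvec a1 a2 b1 b2 + u \<in> vecs X" "hvec c1 c2 d1 d2 \<in> vecs X" "hform c1 c2 d1 d2 a1 a2 b1 b2 = 0"
    and "perp_frame u"
  shows "hvec (a1 + c1) (a2 + c2) (b1 + d1) (b2 + d2) + u \<in> vecs X"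
proof -
  have "g (hvec a1 a2 b1 b2 + u) (hvec c1 c2 d1 d2) = 0"
    using assms(3,4) form_hvec[of c1 c2 d1 d2 a1 a2 b1 b2] form_eq_0_swap perp_frame_form
    by (simp add: form_add_left)
  from psubspace_line_closed[OF psubspace_X assms(1,2) this, of 1 1] show ?thesis
    by (simp add: hvec_add[symmetric] algebra_simps)
qed

lemma plane_closed_in_X: "plane_closed (\<lambda>a1 a2 b1 b2. hvec a1 a2 b1 b2 \<in> vecs X)"
  unfolding move_closed_def
  using singular_move_in_X[of _ _ _ _ 0] frame_plane_in_X by (simp add: perp_frame_def)

text \<open>For Hermitian forms the axis \<open>(1, 0, z, 0)\<close> with \<open>\<sigma> z = - z\<close> is not in a frame plane;
  it is reached on the line through \<open>(1, 1, z, - z)\<close> and \<open>(1 + s, s, (1 + s) z, - s z)\<close>, where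
  \<open>s + \<sigma> s = -1\<close>, both of which split into perpendicular parts.\<close>

lemma axis_in_X:
  assumes "\<sigma> z + \<delta> * z = 0"
  shows "hvec 1 0 z 0 \<in> vecs X"
proof (cases "z = 0")
  case True
  then show ?thesis using hvec_in_X_if_perp_parts[of 1 0 0 0] by simp
next
  case False
  with assms quadratic_or_hermitian obtain a where "\<delta> = 1" "a + \<sigma> a = 1" by auto
  with assms have sz: "\<sigma> z = - z" by (simp add: eq_neg_iff_add_eq_0)
  define s where "s = - a"
  have ss: "s + \<sigma> s = -1" unfolding s_def using \<open>a + \<sigma> a = 1\<close> by (simp add: algebra_simps)
  have k: "hvec 1 1 z (- z) \<in> vecs X" by (rule hvec_in_X_if_perp_parts) simp
  have "(1 + s) * \<sigma> (z + s * z) + s * \<sigma> (- (s * z)) = \<sigma> z * (1 + (s + \<sigma> s))"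
    by (simp add: algebra_simps)
  then have m: "hvec (1 + s) s (z + s * z) (- (s * z)) \<in> vecs X"
    using ss by (intro hvec_in_X_if_perp_parts) simp
  have "g (hvec (1 + s) s (z + s * z) (- (s * z))) (hvec 1 1 z (- z)) = 0"
    unfolding form_hvec hform_def using sz by (simp add: algebra_simps)
  from psubspace_line_closed[OF psubspace_X m k this, of 1 "- s"] show ?thesis
    by (simp add: scale_hvec hvec_add algebra_simps)
qed

lemma singular_hvec_in_X:
  assumes "hquad a1 a2 b1 b2 = 0"
  shows "hvec a1 a2 b1 b2 \<in> vecs X"
proof (rule ccontr)
  assume "hvec a1 a2 b1 b2 \<notin> vecs X"
  moreover have "plane_closed (\<lambda>a1 a2 b1 b2. hvec a1 a2 b1 b2 \<notin> vecs X \<and> hquad a1 a2 b1 b2 = 0)"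
    by (intro move_closed_level move_closed_Not plane_closed_in_X)
      (auto simp: frame_plane_minus frame_plane_hquad)
  moreover have "a1 \<noteq> 0 \<or> a2 \<noteq> 0"
    using \<open>hvec a1 a2 b1 b2 \<notin> vecs X\<close> frame_plane_in_X[of 0 0 b1 b2] by (auto simp: frame_plane_def)
  ultimately obtain z where "hvec 1 0 z 0 \<notin> vecs X" "hquad 1 0 z 0 = 0"
    using plane_closed_reaches_axis assms by blast
  then show False using axis_in_X unfolding hquad_def by simp
qed

lemma singular_closed_translate:
  assumes "perp_frame u"
  shows "singular_closed (\<lambda>a1 a2 b1 b2. hvec a1 a2 b1 b2 + u \<in> vecs X)"
  unfolding move_closed_def using singular_move_in_X[OF _ singular_hvec_in_X _ assms] by blast

definition attached :: "'v \<Rightarrow> bool" where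
  "attached u \<longleftrightarrow> perp_frame u \<and> (\<exists>a1 a2 b1 b2. hvec a1 a2 b1 b2 + u \<in> vecs X)"

lemma attached_in_X:
  assumes "attached u" and "Q (hvec c1 c2 d1 d2 + u) = 0"
  shows "hvec c1 c2 d1 d2 + u \<in> vecs X"
proof -
  obtain a1 a2 b1 b2 where u: "perp_frame u" and in_X: "hvec a1 a2 b1 b2 + u \<in> vecs X"
    using assms(1) unfolding attached_def by blast
  then have "Q (hvec a1 a2 b1 b2 + u) = Q (hvec c1 c2 d1 d2 + u)"
    using psubspace_vecs_quad[OF psubspace_X] assms(2) by simp
  then have "hquad a1 a2 b1 b2 = hquad c1 c2 d1 d2" using perp_frame_quad[OF u] by simp
  then show ?thesis using singular_closed_level_set[OF singular_closed_translate[OF u] in_X] by blast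
qed

text \<open>Both summands are placed on the level of \<open>hquad\<close> that makes them singular, with
  coordinates chosen so that they are perpendicular.\<close>

lemma attached_add:
  assumes "attached u1" "attached u2"
  shows "attached (u1 + u2)"
proof -
  have u: "perp_frame u1" "perp_frame u2" using assms unfolding attached_def by auto
  obtain a where a: "\<sigma> a + \<delta> * a = - Q u1" using trace_surj[of "- Q u1"] conj_quad by auto
  obtain a' where a': "\<sigma> a' + \<delta> * a' = - Q u2" using trace_surj[of "- Q u2"] conj_quad by auto
  define t where "t = \<sigma> (- g u1 u2)"
  let ?x1 = "hvec 1 0 a 0 + u1" and ?x2 = "hvec 0 1 t a' + u2"
  have "Q ?x1 = 0" "Q ?x2 = 0" using perp_frame_quad u a a' unfolding hquad_def by simp_all
  then have "?x1 \<in> vecs X" "?x2 \<in> vecs X" using attached_in_X assms by blast+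
  moreover have "g ?x1 ?x2 = 0"
    using perp_frame_form[OF u(1)] perp_frame_form[OF u(2)]
    by (simp add: form_add_left form_add_right form_hvec hform_def t_def)
  ultimately have "1 *s ?x1 + 1 *s ?x2 \<in> vecs X" by (rule psubspace_line_closed[OF psubspace_X])
  moreover have "1 *s ?x1 + 1 *s ?x2 = hvec 1 1 (a + t) a' + (u1 + u2)"
    using hvec_add[of 1 0 a 0 0 1 t a'] by (simp add: algebra_simps)
  ultimately have "hvec 1 1 (a + t) a' + (u1 + u2) \<in> vecs X" by argo
  then show ?thesis unfolding attached_def using perp_frame_add[OF u] by blast
qed

lemma attached_scale:
  assumes "attached u"
  shows "attached (c *s u)"
proof -
  obtain a1 a2 b1 b2 where "perp_frame u" "hvec a1 a2 b1 b2 + u \<in> vecs X"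
    using assms unfolding attached_def by blast
  from \<open>hvec a1 a2 b1 b2 + u \<in> vecs X\<close> have "c *s (hvec a1 a2 b1 b2 + u) \<in> vecs X"
    by (rule vecs_scale)
  then have "hvec (c * a1) (c * a2) (c * b1) (c * b2) + c *s u \<in> vecs X"
    by (simp add: scale_hvec[symmetric] scale_right_distrib)
  then show ?thesis unfolding attached_def using perp_frame_scale \<open>perp_frame u\<close> by blast
qed

definition frame_perp_part :: "'v \<Rightarrow> 'v" where
  "frame_perp_part x = x - hvec (g x f1) (g x f2) (g x e1) (g x e2)"

lemma frame_decomp: "x = hvec (g x f1) (g x f2) (g x e1) (g x e2) + frame_perp_part x"
  unfolding frame_perp_part_def by simp

lemma perp_frame_perp_part: "perp_frame (frame_perp_part x)"
  unfolding perp_frame_def frame_perp_part_def by (simp add: form_diff_left form_hvec_frame)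

lemma frame_perp_part_add: "frame_perp_part (x + y) = frame_perp_part x + frame_perp_part y"
  unfolding frame_perp_part_def by (simp add: form_add_left hvec_add[symmetric] algebra_simps)

lemma frame_perp_part_scale: "frame_perp_part (c *s x) = c *s frame_perp_part x"
  unfolding frame_perp_part_def by (simp add: form_scale_left scale_hvec scale_right_diff_distrib)

lemma attached_zero: "attached 0"
proof -
  have "hvec 0 0 0 0 + 0 \<in> vecs X" by simp
  then show ?thesis unfolding attached_def perp_frame_def by (simp only: form_zero_left) blast
qed

lemma in_vecs_if_in_point: "p \<in> X \<Longrightarrow> v \<in> p \<Longrightarrow> v \<in> vecs X"
proof -
  assume "p \<in> X" "v \<in> p"
  then have "p \<in> ppoints scale sing" using psubspace_X unfolding psubspace_def by blast
  then obtain w where "p = span {w}" by (rule ppointsE)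
  with \<open>v \<in> p\<close> have "v \<noteq> 0 \<Longrightarrow> span {v} = p" using span_singleton_eq by blast
  with \<open>p \<in> X\<close> show "v \<in> vecs X" unfolding vecs_def by blast
qed

lemma attached_perp_part_span:
  assumes "x \<in> span (\<Union>X)"
  shows "attached (frame_perp_part x)"
proof -
  have "frame_perp_part 0 = 0" using frame_perp_part_scale[of 0 0] by simp
  then have "subspace {x. attached (frame_perp_part x)}"
    unfolding subspace_def
    by (simp add: attached_zero frame_perp_part_add frame_perp_part_scale attached_add attached_scale)
  moreover have "attached (frame_perp_part v)" if "v \<in> \<Union>X" for v
  proof -
    have "hvec (g v f1) (g v f2) (g v e1) (g v e2) + frame_perp_part v \<in> vecs X"
      using that in_vecs_if_in_point frame_decomp[of v] by auto
    then show ?thesis unfolding attached_def using perp_frame_perp_part by blast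
  qed
  ultimately show ?thesis using span_induct[OF assms] by blast
qed

lemma singular_in_span_in_X:
  assumes "x \<in> span (\<Union>X)" and "Q x = 0"
  shows "x \<in> vecs X"
  using attached_in_X[OF attached_perp_part_span[OF assms(1)]] assms(2) frame_decomp by metis

lemma span_points_inter_ppoints: "pg_span_points scale X \<inter> ppoints scale sing = X"
proof
  show "pg_span_points scale X \<inter> ppoints scale sing \<subseteq> X"
  proof
    fix q assume q: "q \<in> pg_span_points scale X \<inter> ppoints scale sing"
    then obtain v where v: "q = span {v}" "v \<noteq> 0" "v \<in> span (\<Union>X)"
      unfolding pg_span_points_def vspan_def by blast
    moreover obtain w where "q = span {w}" "sing (span {w})"
      using q unfolding ppoints_def vspan_def by blast
    ultimately have "Q v = 0" using sing_span_singleton_iff by simp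
    then show "q \<in> X" using singular_in_span_in_X v unfolding vecs_def by blast
  qed
  show "X \<subseteq> pg_span_points scale X \<inter> ppoints scale sing"
  proof
    fix p assume "p \<in> X"
    then have "p \<in> ppoints scale sing" using psubspace_X unfolding psubspace_def by blast
    moreover from this obtain w where "w \<noteq> 0" "p = span {w}" by (rule ppointsE)
    moreover have "w \<in> span (\<Union>X)" using \<open>p \<in> X\<close> \<open>p = span {w}\<close> by (auto intro: span_base)
    ultimately show "p \<in> pg_span_points scale X \<inter> ppoints scale sing"
      unfolding pg_span_points_def vspan_def by blast
  qed
qed

end

section \<open>Hyperbolic pairs in two disjoint maximal singular subspaces\<close>

context polar_form
begin

lemma pmax_singular_disjoint_nondegenerate:
  assumes M1: "pmax_singular scale sing M1" and M2: "pmax_singular scale sing M2"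
    and "M1 \<inter> M2 = {}" and m: "m \<in> vecs M1" "m \<noteq> 0"
  shows "\<exists>y\<in>vecs M2. g y m \<noteq> 0"
proof (rule ccontr)
  assume "\<not> (\<exists>y\<in>vecs M2. g y m \<noteq> 0)"
  then have "\<And>y. y \<in> vecs M2 \<Longrightarrow> g m y = 0" using form_eq_0_swap by blast
  moreover have "Q m = 0"
    using M1 m(1) psubspace_vecs_quad unfolding pmax_singular_def psingular_def by blast
  ultimately have "m \<in> vecs M2" using pmax_singular_perp[OF M2] by blast
  then show False using m \<open>M1 \<inter> M2 = {}\<close> unfolding vecs_def by blast
qed

text \<open>If no vector of \<open>M2\<close> perpendicular to \<open>e'\<close> pairs nontrivially with \<open>e\<close>, then the
  functionals \<open>g _ e\<close> and \<open>g _ e'\<close> are proportional on \<open>M2\<close>, and a combination of \<open>e\<close> and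
  \<open>e'\<close> is perpendicular to all of \<open>M2\<close>.\<close>

lemma exists_dual_vector:
  assumes M1: "pmax_singular scale sing M1" and M2: "pmax_singular scale sing M2"
    and disjoint: "M1 \<inter> M2 = {}"
    and e: "e \<in> vecs M1" "e \<noteq> 0" and e': "e' \<in> vecs M1" "e' \<notin> span {e}"
  shows "\<exists>f\<in>vecs M2. g f e = 1 \<and> g f e' = 0"
proof -
  have sub1: "subspace (vecs M1)" and sub2: "subspace (vecs M2)"
    using M1 M2 psingular_vecs_subspace unfolding pmax_singular_def by blast+
  note nondeg = pmax_singular_disjoint_nondegenerate[OF M1 M2 disjoint]
  obtain y0 where y0: "y0 \<in> vecs M2" "g y0 e' \<noteq> 0"
    using nondeg[OF e'(1)] e'(2) span_zero by blast
  show ?thesis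
  proof (cases "\<exists>y\<in>vecs M2. g y e' = 0 \<and> g y e \<noteq> 0")
    case True
    then obtain y where "y \<in> vecs M2" "g y e' = 0" "g y e \<noteq> 0" by blast
    then show ?thesis
      by (intro bexI[of _ "inverse (g y e) *s y"]) (simp_all add: form_scale_left subspace_scale[OF sub2])
  next
    case False
    define m where "m = e - \<sigma> (g y0 e / g y0 e') *s e'"
    have "m \<in> vecs M1" unfolding m_def using e e' sub1 by (simp add: subspace_diff subspace_scale)
    moreover have "m \<noteq> 0"
    proof
      assume "m = 0"
      then have "e = \<sigma> (g y0 e / g y0 e') *s e'" unfolding m_def by simp
      then have "e \<in> span {e'}" unfolding span_singleton by (rule image_eqI) simp
      then show False using e'(2) in_span_singleton_swap e(2) by blast
    qed
    moreover have "g y m = 0" if y: "y \<in> vecs M2" for y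
    proof -
      let ?c = "g y e' / g y0 e'"
      have "y - ?c *s y0 \<in> vecs M2" using y y0(1) sub2 by (simp add: subspace_diff subspace_scale)
      moreover have "g (y - ?c *s y0) e' = 0" using y0(2) by (simp add: form_simps)
      ultimately have "g (y - ?c *s y0) e = 0" using False by blast
      then have "g y e = ?c * g y0 e" by (simp add: form_simps)
      then show ?thesis unfolding m_def by (simp add: form_simps)
    qed
    ultimately show ?thesis using nondeg by blast
  qed
qed

text \<open>A maximal singular subspace is not a single point when there is a singular line \<open>\<langle>a, b\<rangle>\<close>:
  that line has a point perpendicular to the point \<open>e\<close>, which would then lie in \<open>M\<close>, i.e.
  equal \<open>e\<close>; but then \<open>a\<close> and \<open>b\<close> are perpendicular to \<open>e\<close> and would both lie in \<open>M\<close>.\<close>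

lemma pmax_singular_not_point:
  assumes M: "pmax_singular scale sing M" and point: "vecs M \<subseteq> span {e}"
    and ab: "independent {a, b}" "a \<noteq> b" and sing_ab: "sing (span {a, b})"
  shows False
proof -
  have ab_in: "a \<in> span {a, b}" "b \<in> span {a, b}" by (simp_all add: span_base)
  then have ab_sing: "Q a = 0" "Q b = 0" using sing_span_quad[OF sing_ab] by auto
  have perp_M: "g w s = 0" if w: "g w e = 0" and s: "s \<in> vecs M" for w s
  proof -
    obtain k where "s = k *s e" using point s by (auto simp: span_singleton)
    then show ?thesis using w by (simp add: form_scale_right)
  qed
  have "g a e = 0 \<and> g b e = 0"
  proof (rule ccontr)
    assume nonperp: "\<not> (g a e = 0 \<and> g b e = 0)"
    let ?z = "g b e *s a + (- g a e) *s b"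
    have "?z \<noteq> 0" using independent_pair_coeffs[OF ab, of "g b e" "- g a e"] nonperp by auto
    have z_in: "?z \<in> span {a, b}" using in_span_pair_iff by blast
    then have "Q ?z = 0" using sing_span_quad[OF sing_ab] by blast
    moreover have "g ?z e = 0" by (simp add: form_simps mult.commute)
    ultimately have "?z \<in> vecs M" using pmax_singular_perp[OF M] perp_M by blast
    then have "e \<in> span {?z}" using point in_span_singleton_swap[OF \<open>?z \<noteq> 0\<close>] by blast
    also have "span {?z} \<subseteq> span {a, b}" using z_in by (intro span_minimal) simp_all
    finally show False using sing_span_form[OF sing_ab] ab_in nonperp by blast
  qed
  then have "a \<in> vecs M" "b \<in> vecs M" using pmax_singular_perp[OF M] ab_sing perp_M by blast+
  then have "span {e} = span {a}" "b \<in> span {e}"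
    using point span_singleton_eq independent_pairD(1)[OF ab] by auto
  then show False using independent_pairD(2)[OF ab] by simp
qed

lemma pmax_singular_two_independent:
  assumes M: "pmax_singular scale sing M"
    and ab: "independent {a, b}" "a \<noteq> b" and sing_ab: "sing (span {a, b})"
  obtains e1 e2 where "e1 \<in> vecs M" "e2 \<in> vecs M" "e1 \<noteq> 0" "e2 \<notin> span {e1}"
proof -
  obtain e1 where e1: "e1 \<in> vecs M" "e1 \<noteq> 0"
  proof (rule ccontr)
    assume "\<not> thesis"
    with that have "vecs M \<subseteq> span {0}" by (auto simp: span_singleton)
    then show False using pmax_singular_not_point[OF M _ ab sing_ab] by blast
  qed
  moreover obtain e2 where "e2 \<in> vecs M" "e2 \<notin> span {e1}"
    using pmax_singular_not_point[OF M _ ab sing_ab] by blast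
  ultimately show ?thesis using that by blast
qed

lemma exists_hyperbolic_pairs:
  assumes M1: "pmax_singular scale sing M1" and M2: "pmax_singular scale sing M2"
    and disjoint: "M1 \<inter> M2 = {}" and line: "L \<in> plines scale sing"
  obtains e1 e2 f1 f2 where "hyperbolic_pairs e1 e2 f1 f2"
    "e1 \<in> vecs M1" "e2 \<in> vecs M1" "f1 \<in> vecs M2" "f2 \<in> vecs M2"
proof -
  obtain a b where ab: "independent {a, b}" "a \<noteq> b" "sing (span {a, b})"
    using line unfolding plines_def vspan_def vindep_def by (auto simp: card_2_iff)
  obtain e1 e2 where e: "e1 \<in> vecs M1" "e2 \<in> vecs M1" "e1 \<noteq> 0" "e2 \<notin> span {e1}"
    using pmax_singular_two_independent[OF M1 ab] by blast
  have "e2 \<noteq> 0" "e1 \<notin> span {e2}" using e in_span_singleton_swap span_zero by blast+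
  obtain f1 where f1: "f1 \<in> vecs M2" "g f1 e1 = 1" "g f1 e2 = 0"
    using exists_dual_vector[OF M1 M2 disjoint e(1,3,2,4)] by blast
  obtain f2 where f2: "f2 \<in> vecs M2" "g f2 e2 = 1" "g f2 e1 = 0"
    using exists_dual_vector[OF M1 M2 disjoint e(2) \<open>e2 \<noteq> 0\<close> e(1) \<open>e1 \<notin> span {e2}\<close>] by blast
  have M_sing: "psingular scale sing M1" "psingular scale sing M2"
    using M1 M2 unfolding pmax_singular_def by blast+
  then have "tot_singular (vecs M1)" "tot_singular (vecs M2)" by (simp_all add: psingular_tot_singular)
  then have "hyperbolic_pairs e1 e2 f1 f2"
    using e f1 f2 form_swap[of e1 f2] form_swap[of e2 f1] form_swap[of e1 f1] form_swap[of e2 f2]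
    unfolding hyperbolic_pairs_def tot_singular_def by simp
  with e f1 f2 show ?thesis using that by blast
qed

lemma plines_nonempty:
  assumes "independent S" "card S \<ge> 2" "sing (span S)"
  shows "plines scale sing \<noteq> {}"
proof -
  obtain T where "T \<subseteq> S" "card T = 2" using obtain_subset_with_card_n[OF assms(2)] .
  then obtain a b where ab: "a \<in> S" "b \<in> S" "a \<noteq> b" by (auto simp: card_2_iff)
  then have "a \<in> span S" "b \<in> span S" by (simp_all add: span_base)
  then have "Q a = 0" "Q b = 0" "g a b = 0"
    using sing_span_quad[OF assms(3)] sing_span_form[OF assms(3)] by auto
  then have "sing (span {a, b})" by (rule sing_span_pair)
  moreover have "independent {a, b}" using ab by (intro independent_mono[OF assms(1)]) auto
  ultimately have "span {a, b} \<in> plines scale sing"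
    using plinesI independent_pairD[OF _ ab(3)] by blast
  then show ?thesis by blast
qed

theorem pnice_span_points_inter_ppoints:
  assumes "pnice scale sing X" and "plines scale sing \<noteq> {}"
  shows "pg_span_points scale X \<inter> ppoints scale sing = X"
proof -
  obtain M1 M2 where M: "pmax_singular scale sing M1" "pmax_singular scale sing M2"
    "M1 \<subseteq> X" "M2 \<subseteq> X" "M1 \<inter> M2 = {}" and X: "psubspace scale sing X"
    using assms(1) unfolding pnice_def by blast
  obtain e1 e2 f1 f2 where "hyperbolic_pairs e1 e2 f1 f2"
    "e1 \<in> vecs M1" "e2 \<in> vecs M1" "f1 \<in> vecs M2" "f2 \<in> vecs M2"
    using exists_hyperbolic_pairs[OF M(1,2,5)] assms(2) by blast
  with X vecs_mono[OF M(3)] vecs_mono[OF M(4)]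
  interpret hyperbolic_frame \<sigma> \<delta> scale sing g Q X e1 e2 f1 f2
    by unfold_locales auto
  show ?thesis by (rule span_points_inter_ppoints)
qed

end

section \<open>Hermitian and quadratic forms\<close>

lemma hermitian_polar_form:
  assumes "vector_space scale" and "nondeg_hermitian scale \<sigma> f"
  shows "polar_form \<sigma> 1 scale (tot_iso f) f (\<lambda>v. f v v)"
proof -
  interpret vector_space scale by fact
  have f_add: "f (u + u') v = f u v + f u' v" and f_scale: "f (scale a u) v = a * f u v"
    and f_swap: "f v u = \<sigma> (f u v)" for u u' v a
    using assms(2) unfolding nondeg_hermitian_def by blast+
  interpret field_involution \<sigma>
    using assms(2) unfolding nondeg_hermitian_def nontrivial_involution_def by unfold_locales blast+
  obtain b where "\<sigma> b \<noteq> b"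
    using assms(2) unfolding nondeg_hermitian_def nontrivial_involution_def by (metis eq_id_iff)
  then obtain a where a: "a + \<sigma> a = 1" using exists_trace_one by blast
  have f_add_right: "f u (v + w) = f u v + f u w" for u v w
    by (metis f_add f_swap conj_add)
  have f_scale_right: "f u (scale a v) = \<sigma> a * f u v" for u v a
    by (metis f_scale f_swap conj_mult conj_conj)
  show ?thesis
  proof unfold_locales
    show "(1::'a) = 0 \<and> (\<forall>a. \<sigma> a = a) \<or> 1 = 1 \<and> (\<exists>a. a + \<sigma> a = 1)" using a by blast
    show "f (u + v) (u + v) = f u u + f v v + f u v + 1 * f v u" for u v
      by (simp add: f_add f_add_right algebra_simps)
    show "f (scale a v) (scale a v) = a * \<sigma> a * f v v" for a v
      by (simp add: f_scale f_scale_right)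
    show "\<sigma> (f v v) = f v v" for v using f_swap[of v v] by simp
    show "f v u = \<sigma> (f u v)" for u v by (rule f_swap)
  qed (auto simp: f_add f_scale tot_iso_def)
qed

lemma quadratic_polar_form:
  assumes "vector_space scale" and "nondeg_quadratic scale q"
  shows "polar_form id 0 scale (tot_sing q) (bilin_of q) q"
proof -
  interpret vector_space scale by fact
  have q_scale: "q (scale a v) = a * a * q v" for a v
    using assms(2) unfolding nondeg_quadratic_def by blast
  interpret field_involution id by unfold_locales simp_all
  show ?thesis
  proof unfold_locales
    show "bilin_of q v v = 0" if "q v = 0" for v
    proof -
      have "v + v = scale 2 v" by (metis one_add_one scale_left_distrib scale_one)
      then show ?thesis using q_scale[of 2 v] that unfolding bilin_of_def by simp
    qed
    show "tot_sing q (span A) \<longleftrightarrow>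
        (\<forall>v\<in>span A. q v = 0) \<and> (\<forall>u\<in>span A. \<forall>v\<in>span A. bilin_of q u v = 0)" for A
      unfolding tot_sing_def bilin_of_def by (auto simp: span_add)
  qed (use assms(2) in \<open>auto simp: nondeg_quadratic_def bilin_of_def add.commute\<close>)
qed

text \<open>Neither non-degeneracy, nor the upper bound in the Witt index, nor the exclusion of grids
  is needed: the argument only uses a singular line and the two disjoint maximal singular
  subspaces.\<close>

theorem lemma2:
  fixes scale :: "'k::field \<Rightarrow> 'v::ab_group_add \<Rightarrow> 'v"
    and sing :: "'v set \<Rightarrow> bool"
    and n :: nat
    and X :: "'v set set"
  assumes "vector_space scale"
    and "(\<exists>\<sigma> f. nondeg_hermitian scale \<sigma> f \<and> sing = tot_iso f) \<or>
         (\<exists>q. nondeg_quadratic scale q \<and> sing = tot_sing q \<and> \<not> (n = 2 \<and> has_dim scale 4))"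
    and "witt_index scale sing n"
    and "n \<ge> 2"
    and "pnice scale sing X"
  shows "pg_span_points scale X \<inter> ppoints scale sing = X"
proof -
  obtain S where S: "card S \<ge> 2" "\<not> module.dependent scale S" "sing (module.span scale S)"
    using assms(3,4) unfolding witt_index_def vindep_def vspan_def by auto
  consider \<sigma> f where "polar_form \<sigma> 1 scale sing f (\<lambda>v. f v v)"
    | q where "polar_form id 0 scale sing (bilin_of q) q"
    using assms(2) hermitian_polar_form[OF assms(1)] quadratic_polar_form[OF assms(1)] by blast
  then show ?thesis
    by cases (metis polar_form.plines_nonempty polar_form.pnice_span_points_inter_ppoints S assms(5))+
qed

end
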